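(* Let $D$ be a digraph in $\mathcal D_{10,3}$ with exactly $33$ edges. Then for all $i,j\in\{10,9,8,7\}$ with $i>j$, $D$ contains the edge from $i$ to $j$.
   Context: For positive integers $v,m$, $\mathcal D_{v,m}$ is the class of all digraphs (without multiple edges) on the vertex set $\{v,v-1,\dots,1\}$ such that every edge $i\to j$ satisfies $i>j$, and $[i]^+\le m+[i]^-$ for every vertex $i$, where $[i]^+$ and $[i]^-$ denote the outdegree and indegree of $i$. *)

theory Defs
  imports Main
begin

definition outdeg :: "(nat \<times> nat) set \<Rightarrow> nat \<Rightarrow> nat" where
  "outdeg E i = card {j. (i, j) \<in> E}"

definition indeg :: "(nat \<times> nat) set \<Rightarrow> nat \<Rightarrow> nat" where
  "indeg E i = card {j. (j, i) \<in> E}"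

definition D_class :: "nat \<Rightarrow> nat \<Rightarrow> (nat \<times> nat) set set" where
  "D_class v m = {E. E \<subseteq> {1..v} \<times> {1..v}
                     \<and> (\<forall>(i, j) \<in> E. i > j)
                     \<and> (\<forall>i \<in> {1..v}. outdeg E i \<le> m + indeg E i)}"

end

theory Submission
  imports Defs
begin

text \<open>Split the vertices at \<open>k\<close> into the top block \<open>T = {k<..v}\<close> and the bottom block
\<open>{1..k}\<close>. Edges only go downwards, so every edge into \<open>T\<close> starts in \<open>T\<close>; summing
\<open>outdeg \<le> m + indeg\<close> over \<open>T\<close> therefore bounds the edges from \<open>T\<close> to \<open>{1..k}\<close> by \<open>m |T|\<close>.
The edges inside either block are at most \<open>|T| choose 2\<close> and \<open>k choose 2\<close>.
For \<open>v = 10\<close>, \<open>m = 3\<close>, \<open>k = 6\<close> this gives \<open>|E| \<le> 6 + 12 + 15 = 33\<close>, so a digraph with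
33 edges contains all 6 possible edges inside \<open>{7..10}\<close>.\<close>

lemma card_less_pairs:
  fixes S :: "'a::linorder set"
  assumes "finite S"
  shows "card {(i, j). i \<in> S \<and> j \<in> S \<and> j < i} = card S choose 2"
proof -
  define P where "P = {(i, j). i \<in> S \<and> j \<in> S \<and> j < i}"
  have fin: "finite P" "finite (prod.swap ` P)" "finite ((\<lambda>x. (x, x)) ` S)"
    using assms by (auto simp: P_def intro: finite_subset[of _ "S \<times> S"])
  have "S \<times> S = (P \<union> prod.swap ` P) \<union> (\<lambda>x. (x, x)) ` S"
    by (auto simp: P_def image_iff neq_iff)
  then have "card S * card S = card (P \<union> prod.swap ` P) + card ((\<lambda>x. (x, x)) ` S)"
    unfolding card_cartesian_product[symmetric] using fin
    by (simp only:) (rule card_Un_disjoint, auto simp: P_def)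
  also have "card ((\<lambda>x. (x, x)) ` S) = card S" by (simp add: card_image inj_on_def)
  also have "card (P \<union> prod.swap ` P) = 2 * card P"
    using fin by (subst card_Un_disjoint) (auto simp: P_def card_image)
  finally have "2 * card P = card S * (card S - 1)"
    by (simp add: algebra_simps diff_mult_distrib2)
  then show ?thesis
    unfolding P_def[symmetric] by (simp add: choose_two)
qed

lemma D_classD:
  assumes "E \<in> D_class v m"
  shows D_class_edge_range: "(i, j) \<in> E \<Longrightarrow> 1 \<le> j \<and> j < i \<and> i \<le> v"
    and D_class_degree: "i \<in> {1..v} \<Longrightarrow> outdeg E i \<le> m + indeg E i"
    and D_class_finite: "finite E"
  using assms unfolding D_class_def
  by (auto intro: finite_subset[OF _ finite_cartesian_product[OF finite_atLeastAtMost finite_atLeastAtMost]])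

lemma finite_edge_fibres:
  assumes "finite E"
  shows "finite {j. (i, j) \<in> E}" and "finite {j. (j, i) \<in> E}"
proof -
  have "{j. (i, j) \<in> E} \<subseteq> snd ` E" and "{j. (j, i) \<in> E} \<subseteq> fst ` E" by force+
  then show "finite {j. (i, j) \<in> E}" and "finite {j. (j, i) \<in> E}"
    using assms by (meson finite_imageI finite_subset)+
qed

lemma sum_outdeg_eq_card:
  assumes "finite E" "finite T"
  shows "(\<Sum>i\<in>T. outdeg E i) = card (E \<inter> T \<times> UNIV)"
proof -
  have "(\<Sum>i\<in>T. outdeg E i) = card (SIGMA i:T. {j. (i, j) \<in> E})"
    unfolding outdeg_def using assms
    by (intro card_SigmaI[symmetric] ballI finite_edge_fibres)
  also have "(SIGMA i:T. {j. (i, j) \<in> E}) = E \<inter> T \<times> UNIV" by auto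
  finally show ?thesis .
qed

lemma sum_indeg_eq_card:
  assumes "finite E" "finite T"
  shows "(\<Sum>i\<in>T. indeg E i) = card (E \<inter> UNIV \<times> T)"
proof -
  have "(\<Sum>i\<in>T. indeg E i) = card (SIGMA i:T. {j. (j, i) \<in> E})"
    unfolding indeg_def using assms
    by (intro card_SigmaI[symmetric] ballI finite_edge_fibres)
  also have "(SIGMA i:T. {j. (j, i) \<in> E}) = prod.swap ` (E \<inter> UNIV \<times> T)" by force
  also have "card \<dots> = card (E \<inter> UNIV \<times> T)" by (simp add: card_image)
  finally show ?thesis .
qed

lemma D_class_card_edges_leaving_upper_set:
  assumes E: "E \<in> D_class v m" and T: "T \<subseteq> {1..v}"
    and up: "\<And>i j. (i, j) \<in> E \<Longrightarrow> j \<in> T \<Longrightarrow> i \<in> T"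
  shows "card (E \<inter> T \<times> - T) \<le> m * card T"
proof -
  have finE: "finite E" and finT: "finite T"
    using D_class_finite[OF E] T by (auto intro: finite_subset)
  have split: "E \<inter> T \<times> UNIV = (E \<inter> T \<times> T) \<union> (E \<inter> T \<times> - T)" by auto
  have "card (E \<inter> T \<times> T) + card (E \<inter> T \<times> - T) = (\<Sum>i\<in>T. outdeg E i)"
    unfolding sum_outdeg_eq_card[OF finE finT] split using finE by (subst card_Un_disjoint) auto
  also have "\<dots> \<le> (\<Sum>i\<in>T. m + indeg E i)"
    using T by (intro sum_mono D_class_degree[OF E]) auto
  also have "\<dots> = m * card T + card (E \<inter> UNIV \<times> T)"
    by (simp add: sum.distrib sum_indeg_eq_card[OF finE finT])
  also have "E \<inter> UNIV \<times> T = E \<inter> T \<times> T" using up by auto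
  finally show ?thesis by simp
qed

lemma D_class_card_le:
  assumes E: "E \<in> D_class v m" and "k \<le> v"
  shows "card E \<le> card (E \<inter> {k<..v} \<times> {k<..v}) + m * (v - k) + (k choose 2)"
proof -
  let ?T = "{k<..v}" and ?R = "{1..k}"
  have finE: "finite E" by (rule D_class_finite[OF E])
  have "E \<subseteq> (E \<inter> ?T \<times> ?T \<union> E \<inter> ?T \<times> - ?T) \<union> E \<inter> ?R \<times> ?R"
    using D_class_edge_range[OF E] by fastforce
  then have "card E \<le> card ((E \<inter> ?T \<times> ?T \<union> E \<inter> ?T \<times> - ?T) \<union> E \<inter> ?R \<times> ?R)"
    using finE by (intro card_mono) auto
  also have "\<dots> \<le> card (E \<inter> ?T \<times> ?T) + card (E \<inter> ?T \<times> - ?T) + card (E \<inter> ?R \<times> ?R)"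
    by (meson card_Un_le le_trans add_le_mono1)
  also have "card (E \<inter> ?T \<times> - ?T) \<le> m * (v - k)"
    using D_class_card_edges_leaving_upper_set[OF E, of ?T] D_class_edge_range[OF E] by force
  also have "card (E \<inter> ?R \<times> ?R) \<le> card {(i, j). i \<in> ?R \<and> j \<in> ?R \<and> j < i}"
    using D_class_edge_range[OF E] by (intro card_mono) (auto intro: finite_subset[of _ "?R \<times> ?R"])
  also have "\<dots> = k choose 2" using card_less_pairs[of ?R] by simp
  finally show ?thesis by simp
qed

theorem lemma2:
  fixes E :: "(nat \<times> nat) set"
  assumes "E \<in> D_class 10 3"
    and "card E = 33"
  shows "\<forall>i \<in> {7..10}. \<forall>j \<in> {7..10}. i > j \<longrightarrow> (i, j) \<in> E"
proof -
  let ?T = "{6<..10::nat}"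
  let ?K = "{(i, j). i \<in> ?T \<and> j \<in> ?T \<and> j < i}"
  have "33 \<le> card (E \<inter> ?T \<times> ?T) + 3 * (10 - 6) + (6 choose 2)"
    using D_class_card_le[OF assms(1), of 6] assms(2) by simp
  then have card_top_ge: "6 \<le> card (E \<inter> ?T \<times> ?T)" by (simp add: choose_two)
  have sub: "E \<inter> ?T \<times> ?T \<subseteq> ?K"
    using D_class_edge_range[OF assms(1)] by auto
  have finK: "finite ?K" by (rule finite_subset[of _ "?T \<times> ?T"]) auto
  have "card ?K = 6" using card_less_pairs[of ?T] by (simp add: choose_two)
  then have K_sub: "?K \<subseteq> E"
    using card_top_ge card_mono[OF finK sub] card_subset_eq[OF finK sub] by auto
  show ?thesis
  proof (intro ballI impI)
    fix i j :: nat
    assume "i \<in> {7..10}" "j \<in> {7..10}" "j < i"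
    then have "(i, j) \<in> ?K" by simp
    then show "(i, j) \<in> E" using K_sub by blast
  qed
qed

end
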